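(* Let $R$ be the set of $\phi\in V$ that are not cohomologous to any locally constant function, i.e. there is no locally constant $\varphi$ and continuous $\psi:\Sigma_{\mathbf A}^+\to\mathbb C$ with $\phi-\varphi=\psi\circ\sigma_{\mathbf A}-\psi$. Then $R$ is residual in $V$: there exist open dense subsets $V_1,V_2,\dots$ of $V$ with $\bigcap_{m}V_m\subset R$.
   Context: Let $N\ge2$, $\mathbf A$ an $N\times N$ zero-one aperiodic matrix, $\Sigma_{\mathbf A}^+=\{\omega\in\{1,\dots,N\}^{\mathbb N\cup\{0\}}:\mathbf A(\omega_m\omega_{m+1})=1\ \forall m\}$ with left shift $\sigma_{\mathbf A}$. $\mathrm{var}_m(\phi)=\sup\{|\phi(\omega)-\phi(\omega')|:\omega_k=\omega'_k,\ 0\le k\le m-1\}$; $V=\{\phi:\Sigma_{\mathbf A}^+\to\mathbb C:\mathrm{var}_m(\phi)^{1/m}\to0\}$ with the topology generated by the norms $\|\phi\|_\theta=\|\phi\|_\infty+[\phi]_\theta$, $\theta\in(0,1)$, $[\phi]_\theta$ the Lipschitz constant w.r.t. $d_\theta(\omega,\omega')=\theta^{\min\{m:\omega_m\ne\omega'_m\}}$. A function is locally constant if $\mathrm{var}_m$ of it vanishes for some $m$. *)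

theory Defs
  imports "HOL-Analysis.Analysis"
begin

type_synonym seq = "nat \<Rightarrow> nat"

definition zero_one_matrix :: "nat \<Rightarrow> (nat \<Rightarrow> nat \<Rightarrow> nat) \<Rightarrow> bool" where
  "zero_one_matrix N A \<longleftrightarrow> (\<forall>i\<in>{1..N}. \<forall>j\<in>{1..N}. A i j \<in> {0, 1})"

fun matpow :: "nat \<Rightarrow> (nat \<Rightarrow> nat \<Rightarrow> nat) \<Rightarrow> nat \<Rightarrow> nat \<Rightarrow> nat \<Rightarrow> nat" where
  "matpow N A 0 i j = (if i = j then 1 else 0)"
| "matpow N A (Suc n) i j = (\<Sum>k=1..N. matpow N A n i k * A k j)"

definition aperiodic :: "nat \<Rightarrow> (nat \<Rightarrow> nat \<Rightarrow> nat) \<Rightarrow> bool" where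
  "aperiodic N A \<longleftrightarrow> (\<exists>n>0. \<forall>i\<in>{1..N}. \<forall>j\<in>{1..N}. matpow N A n i j > 0)"

definition Sigma_A :: "nat \<Rightarrow> (nat \<Rightarrow> nat \<Rightarrow> nat) \<Rightarrow> seq set" where
  "Sigma_A N A = {\<omega>. (\<forall>m. \<omega> m \<in> {1..N}) \<and> (\<forall>m. A (\<omega> m) (\<omega> (Suc m)) = 1)}"

definition shift :: "seq \<Rightarrow> seq" where
  "shift \<omega> = (\<lambda>m. \<omega> (Suc m))"

definition var :: "nat \<Rightarrow> (nat \<Rightarrow> nat \<Rightarrow> nat) \<Rightarrow> nat \<Rightarrow> (seq \<Rightarrow> complex) \<Rightarrow> ereal" where
  "var N A m \<phi> = (SUP p \<in> {(\<omega>, \<omega>'). \<omega> \<in> Sigma_A N A \<and> \<omega>' \<in> Sigma_A N A \<and> (\<forall>k<m. \<omega> k = \<omega>' k)}.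
                     ereal (cmod (\<phi> (fst p) - \<phi> (snd p))))"

text \<open>The space V; functions are taken to vanish outside Sigma_A (extensional representation).\<close>
definition Vspace :: "nat \<Rightarrow> (nat \<Rightarrow> nat \<Rightarrow> nat) \<Rightarrow> (seq \<Rightarrow> complex) set" where
  "Vspace N A = {\<phi>. (\<forall>\<omega>. \<omega> \<notin> Sigma_A N A \<longrightarrow> \<phi> \<omega> = 0) \<and>
       (\<forall>\<^sub>F m in sequentially. var N A m \<phi> \<noteq> \<infinity>) \<and>
       ((\<lambda>m. real_of_ereal (var N A m \<phi>) powr (1 / real m)) \<longlonglongrightarrow> 0)}"

definition first_diff :: "seq \<Rightarrow> seq \<Rightarrow> nat" where
  "first_diff \<omega> \<omega>' = (LEAST m. \<omega> m \<noteq> \<omega>' m)"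

definition d_theta :: "real \<Rightarrow> seq \<Rightarrow> seq \<Rightarrow> real" where
  "d_theta \<theta> \<omega> \<omega>' = (if \<omega> = \<omega>' then 0 else \<theta> ^ first_diff \<omega> \<omega>')"

definition sup_norm :: "nat \<Rightarrow> (nat \<Rightarrow> nat \<Rightarrow> nat) \<Rightarrow> (seq \<Rightarrow> complex) \<Rightarrow> real" where
  "sup_norm N A \<phi> = (SUP \<omega> \<in> Sigma_A N A. cmod (\<phi> \<omega>))"

definition lip :: "nat \<Rightarrow> (nat \<Rightarrow> nat \<Rightarrow> nat) \<Rightarrow> real \<Rightarrow> (seq \<Rightarrow> complex) \<Rightarrow> real" where
  "lip N A \<theta> \<phi> = (SUP p \<in> {(\<omega>, \<omega>'). \<omega> \<in> Sigma_A N A \<and> \<omega>' \<in> Sigma_A N A \<and> \<omega> \<noteq> \<omega>'}.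
                     cmod (\<phi> (fst p) - \<phi> (snd p)) / d_theta \<theta> (fst p) (snd p))"

definition theta_norm :: "nat \<Rightarrow> (nat \<Rightarrow> nat \<Rightarrow> nat) \<Rightarrow> real \<Rightarrow> (seq \<Rightarrow> complex) \<Rightarrow> real" where
  "theta_norm N A \<theta> \<phi> = sup_norm N A \<phi> + lip N A \<theta> \<phi>"

definition V_open :: "nat \<Rightarrow> (nat \<Rightarrow> nat \<Rightarrow> nat) \<Rightarrow> (seq \<Rightarrow> complex) set \<Rightarrow> bool" where
  "V_open N A U \<longleftrightarrow> U \<subseteq> Vspace N A \<and>
     (\<forall>\<phi>\<in>U. \<exists>\<Theta> \<epsilon>. finite \<Theta> \<and> \<Theta> \<subseteq> {0<..<1} \<and> \<epsilon> > 0 \<and>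
        {\<psi> \<in> Vspace N A. \<forall>\<theta>\<in>\<Theta>. theta_norm N A \<theta> (\<psi> - \<phi>) < \<epsilon>} \<subseteq> U)"

definition V_topology :: "nat \<Rightarrow> (nat \<Rightarrow> nat \<Rightarrow> nat) \<Rightarrow> (seq \<Rightarrow> complex) topology" where
  "V_topology N A = topology (V_open N A)"

definition locally_constant :: "nat \<Rightarrow> (nat \<Rightarrow> nat \<Rightarrow> nat) \<Rightarrow> (seq \<Rightarrow> complex) \<Rightarrow> bool" where
  "locally_constant N A \<phi> \<longleftrightarrow> (\<exists>m. var N A m \<phi> = 0)"

text \<open>Continuity on Sigma_A (product topology = d_theta topology).\<close>
definition continuous_Sigma :: "nat \<Rightarrow> (nat \<Rightarrow> nat \<Rightarrow> nat) \<Rightarrow> (seq \<Rightarrow> complex) \<Rightarrow> bool" where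
  "continuous_Sigma N A \<psi> \<longleftrightarrow> (\<forall>\<omega>\<in>Sigma_A N A. \<forall>\<epsilon>>0. \<exists>n. \<forall>\<omega>'\<in>Sigma_A N A.
       (\<forall>k<n. \<omega> k = \<omega>' k) \<longrightarrow> cmod (\<psi> \<omega> - \<psi> \<omega>') < \<epsilon>)"

definition cohomologous_to_lc :: "nat \<Rightarrow> (nat \<Rightarrow> nat \<Rightarrow> nat) \<Rightarrow> (seq \<Rightarrow> complex) \<Rightarrow> bool" where
  "cohomologous_to_lc N A \<phi> \<longleftrightarrow> (\<exists>\<phi>0 \<psi>. locally_constant N A \<phi>0 \<and> continuous_Sigma N A \<psi> \<and>
       (\<forall>\<omega>\<in>Sigma_A N A. \<phi> \<omega> - \<phi>0 \<omega> = \<psi> (shift \<omega>) - \<psi> \<omega>))"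

definition Rset :: "nat \<Rightarrow> (nat \<Rightarrow> nat \<Rightarrow> nat) \<Rightarrow> (seq \<Rightarrow> complex) set" where
  "Rset N A = {\<phi> \<in> Vspace N A. \<not> cohomologous_to_lc N A \<phi>}"

end

theory Submission
  imports Defs
begin

text \<open>If \<open>\<phi> - \<phi>\<^sub>0 = \<psi> \<circ> \<sigma> - \<psi>\<close> with \<open>var\<^sub>K \<phi>\<^sub>0 = 0\<close>, the coboundary telescopes along periodic orbits, so
  the Birkhoff sums of \<open>\<phi>\<close> and \<open>\<phi>\<^sub>0\<close> over a period agree. If two periodic orbits of period n
  have the same length-K windows up to a permutation of their n positions, the Birkhoff sums of
  \<open>\<phi>\<^sub>0\<close> over them coincide. Hence \<open>\<phi>\<close> lies in R as soon as, for every m, it separates some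
  pair of periodic orbits whose length-m windows match. Each such set \<open>W\<^sub>m\<close> is open, since a
  Birkhoff sum over finitely many points is continuous for \<open>\<parallel>\<cdot>\<parallel>\<^sub>\<theta>\<close>, and dense: by aperiodicity
  there are two distinct loops of the same length l \<ge> m at state 1, and concatenating them
  along two suitable block words yields periodic orbits with matching windows that are
  separated by a locally constant function g; a small multiple of g moves any \<open>\<phi>\<close> into \<open>W\<^sub>m\<close>.\<close>

section \<open>Loops in the transition graph\<close>

definition admissible_path ::
    "nat \<Rightarrow> (nat \<Rightarrow> nat \<Rightarrow> nat) \<Rightarrow> nat \<Rightarrow> (nat \<Rightarrow> nat) \<Rightarrow> nat \<Rightarrow> nat \<Rightarrow> bool" where
  "admissible_path N A n p i j \<longleftrightarrow>
     p 0 = i \<and> p n = j \<and> (\<forall>t\<le>n. p t \<in> {1..N}) \<and> (\<forall>t<n. A (p t) (p (Suc t)) = 1)"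

lemma matpow_pos_imp_admissible_path:
  assumes "zero_one_matrix N A" and "i \<in> {1..N}" and "j \<in> {1..N}" and "matpow N A n i j > 0"
  shows "\<exists>p. admissible_path N A n p i j"
  using assms(3,4)
proof (induction n arbitrary: j)
  case 0
  then show ?case
    using assms(2) by (auto simp: admissible_path_def split: if_splits intro!: exI[of _ "\<lambda>_. i"])
next
  case (Suc n)
  have "\<exists>k\<in>{1..N}. matpow N A n i k * A k j > 0"
  proof (rule ccontr)
    assume "\<not> ?thesis"
    then have "(\<Sum>k=1..N. matpow N A n i k * A k j) = 0" by (intro sum.neutral) auto
    with Suc.prems(2) show False by (metis matpow.simps(2) less_irrefl)
  qed
  then obtain k where k: "k \<in> {1..N}" "matpow N A n i k > 0" "A k j > 0" by auto
  have "A k j = 1"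
    using assms(1) k(1,3) Suc.prems(1) unfolding zero_one_matrix_def by fastforce
  moreover obtain p where "admissible_path N A n p i k"
    using Suc.IH k(1,2) by blast
  ultimately have "admissible_path N A (Suc n) (\<lambda>t. if t \<le> n then p t else j) i j"
    using Suc.prems(1) unfolding admissible_path_def by (auto simp: le_Suc_eq less_Suc_eq)
  then show ?case by blast
qed

lemma admissible_path_append:
  assumes p: "admissible_path N A n p i j" and q: "admissible_path N A m q j k"
  shows "admissible_path N A (n + m) (\<lambda>t. if t \<le> n then p t else q (t - n)) i k"
proof -
  define r where "r = (\<lambda>t. if t \<le> n then p t else q (t - n))"
  have r_q: "r t = q (t - n)" if "n \<le> t" for t
    using that p q unfolding r_def admissible_path_def by (cases "t = n") auto
  have "r t \<in> {1..N}" if "t \<le> n + m" for t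
    using that p q r_q[of t] unfolding r_def admissible_path_def by (cases "t \<le> n") auto
  moreover have "A (r t) (r (Suc t)) = 1" if "t < n + m" for t
  proof (cases "t < n")
    case True
    then show ?thesis using p unfolding r_def admissible_path_def by simp
  next
    case False
    then have "Suc t - n = Suc (t - n)" "t - n < m" using that by auto
    then show ?thesis using q r_q[of t] r_q[of "Suc t"] False unfolding admissible_path_def by simp
  qed
  moreover have "r 0 = i" "r (n + m) = k"
    using p q r_q[of "n + m"] unfolding r_def admissible_path_def by auto
  ultimately show ?thesis unfolding admissible_path_def r_def by blast
qed

lemma admissible_path_multiple_length:
  assumes "\<forall>i\<in>{1..N}. \<forall>j\<in>{1..N}. \<exists>p. admissible_path N A n p i j"
    and "i \<in> {1..N}" and "j \<in> {1..N}"
  shows "\<exists>p. admissible_path N A (Suc q * n) p i j"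
  using assms(2)
proof (induction q arbitrary: i)
  case 0
  then show ?case using assms(1,3) by simp
next
  case (Suc q)
  obtain p where p: "admissible_path N A n p i i" using assms(1) Suc.prems by blast
  obtain p' where p': "admissible_path N A (Suc q * n) p' i j" using Suc.IH Suc.prems by blast
  have "Suc (Suc q) * n = n + Suc q * n" by simp
  then show ?case using admissible_path_append[OF p p'] by metis
qed

text \<open>The two loops run 1 \<rightarrow> 1 \<rightarrow> 1 and 1 \<rightarrow> 2 \<rightarrow> 1 with legs of lengths n and (m + 1) n,
  so they differ at step n.\<close>
lemma two_distinct_loops:
  assumes "N \<ge> 2" and "zero_one_matrix N A" and "aperiodic N A"
  obtains l c d t where "m \<le> l" and "0 < l"
    and "admissible_path N A l c 1 1" and "admissible_path N A l d 1 1"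
    and "t < l" and "c t \<noteq> d t"
proof -
  obtain n where n: "n > 0" "\<forall>i\<in>{1..N}. \<forall>j\<in>{1..N}. matpow N A n i j > 0"
    using assms(3) unfolding aperiodic_def by blast
  have paths: "\<forall>i\<in>{1..N}. \<forall>j\<in>{1..N}. \<exists>p. admissible_path N A n p i j"
    using n(2) matpow_pos_imp_admissible_path[OF assms(2)] by blast
  have one: "1 \<in> {1..N}" and two: "2 \<in> {1..N}" using assms(1) by auto
  obtain p1 where p1: "admissible_path N A n p1 1 1" using paths one by blast
  obtain p2 where p2: "admissible_path N A n p2 1 2" using paths one two by blast
  obtain q1 where q1: "admissible_path N A (Suc m * n) q1 1 1"
    using admissible_path_multiple_length[OF paths one one] by blast
  obtain q2 where q2: "admissible_path N A (Suc m * n) q2 2 1"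
    using admissible_path_multiple_length[OF paths two one] by blast
  have "Suc m * 1 \<le> Suc m * n" using n(1) by (intro mult_le_mono2) simp
  then have "m \<le> n + Suc m * n" by simp
  moreover have "n < n + Suc m * n" using n(1) by simp
  moreover have "p1 n \<noteq> p2 n" using p1 p2 by (simp add: admissible_path_def)
  ultimately show ?thesis
    using that[OF _ _ admissible_path_append[OF p1 q1] admissible_path_append[OF p2 q2], of n]
    by auto
qed

section \<open>Periodic orbits with matching windows\<close>

definition block_seq :: "nat \<Rightarrow> seq \<Rightarrow> seq \<Rightarrow> bool list \<Rightarrow> seq" where
  "block_seq l c d W i = (if W ! ((i div l) mod length W) then d else c) (i mod l)"

lemma block_seq_block:
  assumes "r < l"
  shows "block_seq l c d W (b * l + r) = (if W ! (b mod length W) then d else c) r"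
  using assms by (simp add: block_seq_def)

lemma block_seq_two_blocks:
  assumes "r < 2 * l"
  shows "block_seq l c d W (b * l + r) =
    (if r < l then (if W ! (b mod length W) then d else c) r
     else (if W ! (Suc b mod length W) then d else c) (r - l))"
proof (cases "r < l")
  case False
  then have "b * l + r = Suc b * l + (r - l)" by simp
  then show ?thesis using block_seq_block[of "r - l" l c d W "Suc b"] False assms by simp
qed (simp add: block_seq_block)

lemma block_seq_periodic:
  "0 < l \<Longrightarrow> block_seq l c d W (i + length W * l) = block_seq l c d W i"
  by (simp add: block_seq_def)

lemma block_seq_in_Sigma_A:
  assumes c: "admissible_path N A l c 1 1" and d: "admissible_path N A l d 1 1" and "0 < l"
  shows "block_seq l c d W \<in> Sigma_A N A"
proof -
  define blk where "blk i = (if W ! ((i div l) mod length W) then d else c)" for i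
  have blk: "admissible_path N A l (blk i) 1 1" for i using c d by (simp add: blk_def)
  have seq: "block_seq l c d W i = blk i (i mod l)" for i by (simp add: block_seq_def blk_def)
  have "i mod l < l" for i using \<open>0 < l\<close> by simp
  then have "block_seq l c d W i \<in> {1..N}" for i
    using blk[of i] unfolding seq admissible_path_def by (simp add: less_imp_le)
  moreover have "A (block_seq l c d W i) (block_seq l c d W (Suc i)) = 1" for i
  proof (cases "Suc (i mod l) = l")
    case True
    then have "block_seq l c d W (Suc i) = 1"
      using blk[of "Suc i"] unfolding seq admissible_path_def by (simp add: mod_Suc)
    moreover have "A (blk i (i mod l)) (blk i l) = 1" "blk i l = 1"
      using blk[of i] True unfolding admissible_path_def by (metis lessI)+
    ultimately show ?thesis unfolding seq by simp
  next
    case False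
    then have "Suc i mod l = Suc (i mod l)" "blk (Suc i) = blk i" "i mod l < l"
      using \<open>0 < l\<close> by (simp_all add: mod_Suc div_Suc blk_def)
    then show ?thesis
      using blk[of i] False unfolding seq admissible_path_def by (simp add: Suc_lessI)
  qed
  ultimately show ?thesis unfolding Sigma_A_def by blast
qed

lemma block_seq_block_eqD:
  assumes "\<forall>r<l. block_seq l c d W (b * l + r) = block_seq l c d W (b' * l + r)"
    and "t < l" and "c t \<noteq> d t"
  shows "W ! (b mod length W) = W ! (b' mod length W)"
proof -
  have "(if W ! (b mod length W) then d else c) t = (if W ! (b' mod length W) then d else c) t"
    using assms(1,2) by (simp add: block_seq_block)
  then show ?thesis using assms(3) by (cases "W ! (b mod length W)"; cases "W ! (b' mod length W)") auto
qed

definition shifted :: "seq \<Rightarrow> nat \<Rightarrow> seq" where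
  "shifted x k = (\<lambda>i. x (k + i))"

definition birkhoff_sum :: "nat \<Rightarrow> seq \<Rightarrow> (seq \<Rightarrow> complex) \<Rightarrow> complex" where
  "birkhoff_sum n x \<phi> = (\<Sum>k<n. \<phi> (shifted x k))"

definition matching_orbits ::
    "nat \<Rightarrow> (nat \<Rightarrow> nat \<Rightarrow> nat) \<Rightarrow> nat \<Rightarrow> nat \<Rightarrow> seq \<Rightarrow> seq \<Rightarrow> (nat \<Rightarrow> nat) \<Rightarrow> bool" where
  "matching_orbits N A m n x y \<pi> \<longleftrightarrow> x \<in> Sigma_A N A \<and> y \<in> Sigma_A N A \<and> 0 < n \<and>
     (\<forall>i. x (i + n) = x i) \<and> (\<forall>i. y (i + n) = y i) \<and> bij_betw \<pi> {..<n} {..<n} \<and>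
     (\<forall>k<n. \<forall>j<m. x (k + j) = y (\<pi> k + j))"

definition prefix_determined :: "nat \<Rightarrow> (nat \<Rightarrow> nat \<Rightarrow> nat) \<Rightarrow> nat \<Rightarrow> (seq \<Rightarrow> complex) \<Rightarrow> bool" where
  "prefix_determined N A K g \<longleftrightarrow>
     (\<forall>\<omega>\<in>Sigma_A N A. \<forall>\<omega>'\<in>Sigma_A N A. (\<forall>i<K. \<omega> i = \<omega>' i) \<longrightarrow> g \<omega> = g \<omega>')"

lemma shifted_0 [simp]: "shifted x 0 = x"
  by (simp add: shifted_def)

lemma shifted_in_Sigma_A: "x \<in> Sigma_A N A \<Longrightarrow> shifted x k \<in> Sigma_A N A"
  unfolding Sigma_A_def shifted_def by auto

lemma matching_orbits_block_seq:
  assumes c: "admissible_path N A l c 1 1" and d: "admissible_path N A l d 1 1"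
    and "0 < l" and "m \<le> l" and "0 < L" and "length X = L" and "length Y = L"
    and p: "bij_betw p {..<L} {..<L}"
    and pairs: "\<forall>b<L. X ! b = Y ! p b \<and> X ! (Suc b mod L) = Y ! (Suc (p b) mod L)"
  shows "matching_orbits N A m (L * l) (block_seq l c d X) (block_seq l c d Y)
           (\<lambda>k. p (k div l) * l + k mod l)"
proof -
  define \<pi> where "\<pi> k = p (k div l) * l + k mod l" for k
  have div_lt: "k div l < L" if "k < L * l" for k
    using that \<open>0 < l\<close> by (simp add: less_mult_imp_div_less)
  have "inj_on \<pi> {..<L * l}"
  proof (rule inj_onI)
    fix k k' assume "k \<in> {..<L * l}" "k' \<in> {..<L * l}" "\<pi> k = \<pi> k'"
    moreover have "\<pi> k div l = p (k div l)" "\<pi> k mod l = k mod l" for k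
      using \<open>0 < l\<close> unfolding \<pi>_def by simp_all
    ultimately have "p (k div l) = p (k' div l)" "k mod l = k' mod l" by metis+
    moreover have "k div l < L" "k' div l < L" using \<open>k \<in> _\<close> \<open>k' \<in> _\<close> div_lt by auto
    ultimately show "k = k'" using p unfolding bij_betw_def inj_on_def by (metis div_mult_mod_eq lessThan_iff)
  qed
  moreover have "\<pi> ` {..<L * l} \<subseteq> {..<L * l}"
  proof clarify
    fix k assume "k < L * l"
    then have "Suc (p (k div l)) \<le> L" using p div_lt by (auto simp: bij_betw_def Suc_le_eq)
    then have "Suc (p (k div l)) * l \<le> L * l" by (rule mult_le_mono1)
    moreover have "k mod l < l" using \<open>0 < l\<close> by simp
    ultimately show "\<pi> k < L * l" unfolding \<pi>_def by simp
  qed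
  ultimately have "bij_betw \<pi> {..<L * l} {..<L * l}"
    unfolding bij_betw_def using endo_inj_surj by blast
  moreover have "block_seq l c d X (k + j) = block_seq l c d Y (\<pi> k + j)" if "k < L * l" "j < m" for k j
  proof -
    have "k mod l < l" using \<open>0 < l\<close> by simp
    then have "k mod l + j < 2 * l" using \<open>m \<le> l\<close> that(2) by linarith
    moreover have "k + j = k div l * l + (k mod l + j)" "\<pi> k + j = p (k div l) * l + (k mod l + j)"
      unfolding \<pi>_def by simp_all
    moreover have "p (k div l) < L" using p div_lt[OF that(1)] by (auto simp: bij_betw_def)
    ultimately show ?thesis
      using pairs div_lt[OF that(1)] \<open>length X = L\<close> \<open>length Y = L\<close>
      by (simp only: block_seq_two_blocks) simp
  qed
  moreover have "block_seq l c d W (i + L * l) = block_seq l c d W i" if "length W = L" for W i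
    using block_seq_periodic[OF \<open>0 < l\<close>] that by blast
  ultimately show ?thesis
    using block_seq_in_Sigma_A[OF c d \<open>0 < l\<close>] \<open>0 < L\<close> \<open>0 < l\<close> \<open>length X = L\<close> \<open>length Y = L\<close>
    unfolding matching_orbits_def \<pi>_def by auto
qed

definition repetition_indicator :: "nat \<Rightarrow> (nat \<Rightarrow> nat \<Rightarrow> nat) \<Rightarrow> nat \<Rightarrow> nat \<Rightarrow> seq \<Rightarrow> complex" where
  "repetition_indicator N A l r \<omega> = of_bool (\<omega> \<in> Sigma_A N A \<and> (\<forall>i<Suc r * l. \<omega> i = \<omega> (i + l)))"

lemma prefix_determined_repetition_indicator:
  "prefix_determined N A (Suc (Suc r) * l) (repetition_indicator N A l r)"
  unfolding prefix_determined_def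
proof (intro ballI impI)
  fix \<omega> \<omega>' :: seq
  assume "\<forall>i<Suc (Suc r) * l. \<omega> i = \<omega>' i" and "\<omega> \<in> Sigma_A N A" and "\<omega>' \<in> Sigma_A N A"
  moreover have "i + l < Suc (Suc r) * l" if "i < Suc r * l" for i
    using that by simp
  ultimately have "(\<forall>i<Suc r * l. \<omega> i = \<omega> (i + l)) \<longleftrightarrow> (\<forall>i<Suc r * l. \<omega>' i = \<omega>' (i + l))"
    by (metis add_lessD1)
  then show "repetition_indicator N A l r \<omega> = repetition_indicator N A l r \<omega>'"
    using \<open>\<omega> \<in> _\<close> \<open>\<omega>' \<in> _\<close> unfolding repetition_indicator_def by simp
qed

lemma repetition_indicator_block_seq_eq_1:
  assumes "block_seq l c d W \<in> Sigma_A N A" and "0 < l" and "Suc (Suc r) \<le> length W"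
    and "\<forall>b<Suc r. W ! b = W ! Suc b"
  shows "repetition_indicator N A l r (block_seq l c d W) = 1"
proof -
  have "block_seq l c d W i = block_seq l c d W (i + l)" if "i < Suc r * l" for i
  proof -
    define b where "b = i div l"
    have "b < Suc r" using that \<open>0 < l\<close> unfolding b_def by (simp add: less_mult_imp_div_less)
    then have "b mod length W = b" "Suc b mod length W = Suc b" "W ! b = W ! Suc b"
      using assms(3,4) by simp_all
    moreover have "i mod l < l" using \<open>0 < l\<close> by simp
    ultimately have "block_seq l c d W (b * l + i mod l) = block_seq l c d W (Suc b * l + i mod l)"
      by (simp only: block_seq_block)
    moreover have "b * l + i mod l = i" "Suc b * l + i mod l = i + l" unfolding b_def by simp_all
    ultimately show ?thesis by metis
  qed
  then show ?thesis using assms(1) unfolding repetition_indicator_def by simp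
qed

lemma repetition_indicator_block_seq_eq_0:
  assumes "0 < l" and "t < l" and "c t \<noteq> d t"
    and no_run: "\<forall>b. \<exists>j<r. W ! ((b + j) mod length W) \<noteq> W ! ((b + Suc j) mod length W)"
  shows "repetition_indicator N A l r (shifted (block_seq l c d W) k) = 0"
proof (rule ccontr)
  \<comment> \<open>The window of length (r + 1) l at k contains the full blocks b, ..., b + r with
     b = k div l + 1, and its l-periodicity would make them all equal.\<close>
  define y where "y = block_seq l c d W"
  assume "repetition_indicator N A l r (shifted y k) \<noteq> 0"
  then have rep: "y (k + i) = y (k + i + l)" if "i < Suc r * l" for i
    using that unfolding repetition_indicator_def shifted_def by (auto simp: add.assoc)
  define b where "b = Suc (k div l)"
  have "k < b * l" "b * l \<le> k + l"
    unfolding b_def using \<open>0 < l\<close> by (metis add.commute div_mult_mod_eq mod_less_divisor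
        mult_Suc nat_add_left_cancel_less) simp
  have "W ! ((b + j) mod length W) = W ! ((b + Suc j) mod length W)" if "j < r" for j
  proof -
    have "y ((b + j) * l + w) = y (Suc (b + j) * l + w)" if "w < l" for w
    proof -
      have "(b + j) * l + w < Suc (b + j) * l" using that by simp
      also have "\<dots> \<le> (b + r) * l" using \<open>j < r\<close> by (intro mult_le_mono1) simp
      also have "\<dots> \<le> k + Suc r * l" using \<open>b * l \<le> k + l\<close> by (simp add: add_mult_distrib)
      finally have "(b + j) * l + w < k + Suc r * l" .
      moreover have "k < (b + j) * l + w" using \<open>k < b * l\<close> by (simp add: add_mult_distrib)
      ultimately have "(b + j) * l + w - k < Suc r * l" "k + ((b + j) * l + w - k) = (b + j) * l + w"
        by arith+
      then show ?thesis using rep[of "(b + j) * l + w - k"] by (simp add: algebra_simps)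
    qed
    then have "\<forall>w<l. block_seq l c d W ((b + j) * l + w) = block_seq l c d W (Suc (b + j) * l + w)"
      unfolding y_def by blast
    from block_seq_block_eqD[OF this \<open>t < l\<close> \<open>c t \<noteq> d t\<close>] show ?thesis by simp
  qed
  then show False using no_run by blast
qed

text \<open>With c for False and d for True these are the cyclic block words c^6 d c d and c^3 d c^4 d:
  they have the same cyclic pairs of consecutive blocks (matched by \<open>word_perm\<close>),
  but only the first contains six consecutive equal blocks.\<close>

definition word_x :: "bool list" where
  "word_x = [False, False, False, False, False, False, True, False, True]"

definition word_y :: "bool list" where
  "word_y = [False, False, False, True, False, False, False, False, True]"

definition word_perm :: "nat list" where
  "word_perm = [0, 1, 4, 5, 6, 2, 3, 7, 8]"

lemma lessThan_9: "{..<9} = {0, 1, 2, 3, 4, 5, 6, 7, 8 :: nat}"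
  by (simp add: lessThan_nat_numeral lessThan_Suc insert_commute)

lemma all_less_9: "(\<forall>b<9. P b) \<longleftrightarrow> (\<forall>b\<in>{0, 1, 2, 3, 4, 5, 6, 7, 8 :: nat}. P b)"
  unfolding lessThan_9[symmetric] by auto

lemma ex_less_4: "(\<exists>j<4. P j) \<longleftrightarrow> (\<exists>j\<in>{0, 1, 2, 3 :: nat}. P j)"
proof -
  have "{..<4} = {0, 1, 2, 3 :: nat}" by (simp add: lessThan_nat_numeral lessThan_Suc insert_commute)
  then show ?thesis by (metis lessThan_iff)
qed

lemma word_perm_bij: "bij_betw ((!) word_perm) {..<9} {..<9}"
proof -
  have "inj_on ((!) word_perm) {..<9}"
    unfolding lessThan_9 by (simp add: word_perm_def)
  moreover have "(!) word_perm ` {..<9} \<subseteq> {..<9}"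
    unfolding lessThan_9 by (simp add: word_perm_def)
  ultimately show ?thesis unfolding bij_betw_def using endo_inj_surj by blast
qed

lemma word_perm_pairs:
  "\<forall>b<9. word_x ! b = word_y ! (word_perm ! b) \<and>
     word_x ! (Suc b mod 9) = word_y ! (Suc (word_perm ! b) mod 9)"
  unfolding all_less_9 by (simp add: word_x_def word_y_def word_perm_def)

lemma word_x_run: "\<forall>b<5. word_x ! b = word_x ! Suc b"
  by (auto simp: word_x_def less_Suc_eq numeral_eq_Suc)

lemma word_y_no_run:
  "\<forall>b. \<exists>j<4. word_y ! ((b + j) mod length word_y) \<noteq> word_y ! ((b + Suc j) mod length word_y)"
proof
  fix b
  have "\<forall>r<9. \<exists>j<4. word_y ! ((r + j) mod 9) \<noteq> word_y ! ((r + Suc j) mod 9)"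
    unfolding all_less_9 ex_less_4 by (simp add: word_y_def)
  then have "\<exists>j<4. word_y ! ((b mod 9 + j) mod 9) \<noteq> word_y ! ((b mod 9 + Suc j) mod 9)"
    by simp
  moreover have "(b mod 9 + j) mod 9 = (b + j) mod 9" for j
    by (rule mod_add_left_eq)
  ultimately show "\<exists>j<4. word_y ! ((b + j) mod length word_y) \<noteq> word_y ! ((b + Suc j) mod length word_y)"
    by (simp add: word_y_def del: add_Suc_right)
qed

lemma matching_orbits_separated_by_locally_constant:
  assumes "N \<ge> 2" and "zero_one_matrix N A" and "aperiodic N A"
  obtains n x y \<pi> K g where "matching_orbits N A m n x y \<pi>" and "prefix_determined N A K g"
    and "\<forall>\<omega>. cmod (g \<omega>) \<le> 1" and "\<forall>\<omega>. \<omega> \<notin> Sigma_A N A \<longrightarrow> g \<omega> = 0"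
    and "birkhoff_sum n x g \<noteq> birkhoff_sum n y g"
proof -
  obtain l c d t where "m \<le> l" "0 < l" and c: "admissible_path N A l c 1 1"
    and d: "admissible_path N A l d 1 1" and "t < l" "c t \<noteq> d t"
    using two_distinct_loops[OF assms] by metis
  define x where "x = block_seq l c d word_x"
  define y where "y = block_seq l c d word_y"
  define g where "g = repetition_indicator N A l 4"
  have match: "matching_orbits N A m (9 * l) x y (\<lambda>k. word_perm ! (k div l) * l + k mod l)"
    unfolding x_def y_def
    by (rule matching_orbits_block_seq[OF c d \<open>0 < l\<close> \<open>m \<le> l\<close> _ _ _ word_perm_bij word_perm_pairs])
      (simp_all add: word_x_def word_y_def)
  have "birkhoff_sum (9 * l) y g = 0"
    unfolding birkhoff_sum_def g_def y_def
    using repetition_indicator_block_seq_eq_0[where r = 4 and c = c and d = d,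
        OF \<open>0 < l\<close> \<open>t < l\<close> \<open>c t \<noteq> d t\<close> word_y_no_run]
    by simp
  moreover have "birkhoff_sum (9 * l) x g \<noteq> 0"
  proof -
    have "g x = 1"
      unfolding g_def x_def using word_x_run block_seq_in_Sigma_A[OF c d \<open>0 < l\<close>] \<open>0 < l\<close>
      by (intro repetition_indicator_block_seq_eq_1) (simp_all add: word_x_def)
    then have "Re (g (shifted x 0)) \<le> (\<Sum>k<9 * l. Re (g (shifted x k)))"
      using \<open>0 < l\<close> by (intro member_le_sum) (auto simp: g_def repetition_indicator_def)
    then have "1 \<le> (\<Sum>k<9 * l. Re (g (shifted x k)))" using \<open>g x = 1\<close> by simp
    then show ?thesis unfolding birkhoff_sum_def by (metis Re_sum zero_complex.sel(1) not_one_le_zero)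
  qed
  moreover have "\<forall>\<omega>. cmod (g \<omega>) \<le> 1" "\<forall>\<omega>. \<omega> \<notin> Sigma_A N A \<longrightarrow> g \<omega> = 0"
    unfolding g_def repetition_indicator_def by auto
  ultimately show ?thesis
    using that[OF match prefix_determined_repetition_indicator] unfolding g_def by simp
qed

section \<open>Coboundaries along periodic orbits\<close>

lemma ereal_norm_diff_le_var:
  assumes "\<omega> \<in> Sigma_A N A" and "\<omega>' \<in> Sigma_A N A" and "\<forall>k<m. \<omega> k = \<omega>' k"
  shows "ereal (cmod (\<phi> \<omega> - \<phi> \<omega>')) \<le> var N A m \<phi>"
  unfolding var_def by (rule SUP_upper2[of "(\<omega>, \<omega>')"]) (use assms in auto)

lemma norm_diff_le_var:
  assumes "\<omega> \<in> Sigma_A N A" and "\<omega>' \<in> Sigma_A N A" and "\<forall>k<m. \<omega> k = \<omega>' k"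
    and "var N A m \<phi> \<noteq> \<infinity>"
  shows "cmod (\<phi> \<omega> - \<phi> \<omega>') \<le> real_of_ereal (var N A m \<phi>)"
  using ereal_norm_diff_le_var[OF assms(1-3), of \<phi>] assms(4) by (cases "var N A m \<phi>") auto

lemma var_eq_0_imp_prefix_determined:
  assumes "var N A K \<phi> = 0"
  shows "prefix_determined N A K \<phi>"
  unfolding prefix_determined_def
proof (intro ballI impI)
  fix \<omega> \<omega>' assume "\<omega> \<in> Sigma_A N A" "\<omega>' \<in> Sigma_A N A" "\<forall>i<K. \<omega> i = \<omega>' i"
  then have "ereal (cmod (\<phi> \<omega> - \<phi> \<omega>')) \<le> 0"
    using ereal_norm_diff_le_var[of \<omega> N A \<omega>' K \<phi>] assms by simp
  then show "\<phi> \<omega> = \<phi> \<omega>'" by simp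
qed

lemma birkhoff_sum_periodic_coboundary:
  assumes "z \<in> Sigma_A N A" and "\<forall>i. z (i + n) = z i"
    and coh: "\<forall>\<omega>\<in>Sigma_A N A. \<phi> \<omega> - \<phi>0 \<omega> = \<psi> (shift \<omega>) - \<psi> \<omega>"
  shows "birkhoff_sum n z \<phi> = birkhoff_sum n z \<phi>0"
proof -
  have "\<phi> (shifted z k) = \<phi>0 (shifted z k) + (\<psi> (shifted z (Suc k)) - \<psi> (shifted z k))" for k
  proof -
    have "shift (shifted z k) = shifted z (Suc k)" unfolding shift_def shifted_def by simp
    then show ?thesis
      using coh shifted_in_Sigma_A[OF assms(1), of k] by (metis add_diff_cancel_left' diff_add_cancel)
  qed
  then have "birkhoff_sum n z \<phi> = birkhoff_sum n z \<phi>0 + (\<psi> (shifted z n) - \<psi> (shifted z 0))"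
    unfolding birkhoff_sum_def
    by (simp add: sum.distrib sum_lessThan_telescope[of "\<lambda>k. \<psi> (shifted z k)"])
  moreover have "shifted z n = shifted z 0"
    unfolding shifted_def using assms(2) by (simp add: add.commute)
  ultimately show ?thesis by simp
qed

lemma birkhoff_sum_matching_orbits_eq:
  assumes match: "matching_orbits N A K n x y \<pi>" and "prefix_determined N A K \<phi>"
  shows "birkhoff_sum n x \<phi> = birkhoff_sum n y \<phi>"
proof -
  have x: "x \<in> Sigma_A N A" and y: "y \<in> Sigma_A N A" and \<pi>: "bij_betw \<pi> {..<n} {..<n}"
    using match unfolding matching_orbits_def by auto
  have "\<phi> (shifted x k) = \<phi> (shifted y (\<pi> k))" if "k < n" for k
    using assms shifted_in_Sigma_A[OF x] shifted_in_Sigma_A[OF y] that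
    unfolding matching_orbits_def prefix_determined_def shifted_def by simp
  then have "birkhoff_sum n x \<phi> = (\<Sum>k<n. \<phi> (shifted y (\<pi> k)))"
    unfolding birkhoff_sum_def by simp
  also have "\<dots> = birkhoff_sum n y \<phi>"
    unfolding birkhoff_sum_def using sum.reindex_bij_betw[OF \<pi>, of "\<lambda>k. \<phi> (shifted y k)"] by simp
  finally show ?thesis .
qed

lemma cohomologous_to_lc_imp_birkhoff_sums_eq:
  assumes "cohomologous_to_lc N A \<phi>"
  shows "\<exists>K. \<forall>n x y \<pi>. matching_orbits N A K n x y \<pi> \<longrightarrow> birkhoff_sum n x \<phi> = birkhoff_sum n y \<phi>"
proof -
  obtain \<phi>0 \<psi> K where "var N A K \<phi>0 = 0"
    and coh: "\<forall>\<omega>\<in>Sigma_A N A. \<phi> \<omega> - \<phi>0 \<omega> = \<psi> (shift \<omega>) - \<psi> \<omega>"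
    using assms unfolding cohomologous_to_lc_def locally_constant_def by blast
  have "birkhoff_sum n x \<phi> = birkhoff_sum n y \<phi>" if match: "matching_orbits N A K n x y \<pi>" for n x y \<pi>
  proof -
    have "x \<in> Sigma_A N A" "\<forall>i. x (i + n) = x i" "y \<in> Sigma_A N A" "\<forall>i. y (i + n) = y i"
      using match unfolding matching_orbits_def by auto
    then show ?thesis
      using birkhoff_sum_periodic_coboundary[OF _ _ coh] birkhoff_sum_matching_orbits_eq[OF match]
        var_eq_0_imp_prefix_determined[OF \<open>var N A K \<phi>0 = 0\<close>] by metis
  qed
  then show ?thesis by blast
qed

section \<open>Functions in V are bounded and \<theta>-Lipschitz\<close>

lemma Vspace_bounded:
  assumes "f \<in> Vspace N A"
  obtains B where "\<forall>\<omega>\<in>Sigma_A N A. cmod (f \<omega>) \<le> B"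
proof -
  from assms have "\<forall>\<^sub>F m in sequentially. var N A m f \<noteq> \<infinity>" unfolding Vspace_def by blast
  then obtain K where K: "var N A K f \<noteq> \<infinity>" unfolding eventually_sequentially by blast
  define cylinders where "cylinders = (\<lambda>\<omega>. map \<omega> [0..<K]) ` Sigma_A N A"
  have "cylinders \<subseteq> {xs. set xs \<subseteq> {1..N} \<and> length xs = K}"
    unfolding cylinders_def Sigma_A_def by auto
  then have fin: "finite cylinders" by (rule finite_subset) (rule finite_lists_length_eq, simp)
  define rep where "rep p = (SOME \<omega>. \<omega> \<in> Sigma_A N A \<and> map \<omega> [0..<K] = p)" for p
  have "cmod (f \<omega>) \<le> (\<Sum>p\<in>cylinders. cmod (f (rep p))) + real_of_ereal (var N A K f)"
    if \<omega>: "\<omega> \<in> Sigma_A N A" for \<omega>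
  proof -
    define p where "p = map \<omega> [0..<K]"
    have "p \<in> cylinders" unfolding p_def cylinders_def using \<omega> by blast
    have "rep p \<in> Sigma_A N A \<and> map (rep p) [0..<K] = p"
      unfolding rep_def by (rule someI[of _ \<omega>]) (use \<omega> p_def in blast)
    then have "cmod (f \<omega> - f (rep p)) \<le> real_of_ereal (var N A K f)"
      using norm_diff_le_var[OF \<omega> _ _ K] unfolding p_def by (simp add: map_eq_conv)
    moreover have "cmod (f (rep p)) \<le> (\<Sum>p\<in>cylinders. cmod (f (rep p)))"
      by (rule member_le_sum[OF \<open>p \<in> cylinders\<close> _ fin]) simp
    moreover have "cmod (f \<omega>) \<le> cmod (f (rep p)) + cmod (f \<omega> - f (rep p))"
      by (metis add.commute diff_add_cancel norm_triangle_ineq)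
    ultimately show ?thesis by linarith
  qed
  then show ?thesis using that by blast
qed

lemma less_power_if_powr_inverse_less:
  fixes a \<theta> :: real
  assumes "0 \<le> a" and "0 < k" and "a powr (1 / real k) < \<theta>"
  shows "a < \<theta> ^ k"
proof (cases "a = 0")
  case True
  then show ?thesis using assms(3) by simp
next
  case False
  then have "(a powr (1 / real k)) ^ k = a"
    using assms(1,2) by (simp add: powr_realpow[symmetric] powr_powr)
  moreover have "(a powr (1 / real k)) ^ k < \<theta> ^ k"
    using assms(2,3) by (intro power_strict_mono) auto
  ultimately show ?thesis by simp
qed

lemma Vspace_eventually_oscillation_less_power:
  assumes "f \<in> Vspace N A" and "0 < \<theta>"
  shows "\<forall>\<^sub>F m in sequentially. \<forall>\<omega>\<in>Sigma_A N A. \<forall>\<omega>'\<in>Sigma_A N A.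
           (\<forall>k<m. \<omega> k = \<omega>' k) \<longrightarrow> cmod (f \<omega> - f \<omega>') < \<theta> ^ m"
proof -
  have "(\<lambda>m. real_of_ereal (var N A m f) powr (1 / real m)) \<longlonglongrightarrow> 0"
    using assms(1) unfolding Vspace_def by blast
  then have "\<forall>\<^sub>F m in sequentially. real_of_ereal (var N A m f) powr (1 / real m) < \<theta>"
    using assms(2) by (rule order_tendstoD(2))
  moreover have "\<forall>\<^sub>F m in sequentially. var N A m f \<noteq> \<infinity>"
    using assms(1) unfolding Vspace_def by blast
  ultimately show ?thesis
    using eventually_gt_at_top[of 0]
  proof eventually_elim
    case (elim m)
    show ?case
    proof (intro ballI impI)
      fix \<omega> \<omega>' assume "\<omega> \<in> Sigma_A N A" "\<omega>' \<in> Sigma_A N A" "\<forall>k<m. \<omega> k = \<omega>' k"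
      then have osc: "cmod (f \<omega> - f \<omega>') \<le> real_of_ereal (var N A m f)"
        using norm_diff_le_var elim by blast
      moreover have "real_of_ereal (var N A m f) < \<theta> ^ m"
        using elim osc norm_ge_zero[of "f \<omega> - f \<omega>'"]
        by (intro less_power_if_powr_inverse_less) linarith+
      ultimately show "cmod (f \<omega> - f \<omega>') < \<theta> ^ m" by linarith
    qed
  qed
qed

lemma first_diff_agree: "\<omega> \<noteq> \<omega>' \<Longrightarrow> \<forall>i<first_diff \<omega> \<omega>'. \<omega> i = \<omega>' i"
  unfolding first_diff_def using not_less_Least by blast

lemma d_theta_neq: "\<omega> \<noteq> \<omega>' \<Longrightarrow> d_theta \<theta> \<omega> \<omega>' = \<theta> ^ first_diff \<omega> \<omega>'"
  unfolding d_theta_def by simp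

lemma Vspace_lipschitz:
  assumes "f \<in> Vspace N A" and "0 < \<theta>" and "\<theta> < 1"
  obtains L where "\<forall>\<omega>\<in>Sigma_A N A. \<forall>\<omega>'\<in>Sigma_A N A. \<omega> \<noteq> \<omega>' \<longrightarrow>
                     cmod (f \<omega> - f \<omega>') / d_theta \<theta> \<omega> \<omega>' \<le> L"
proof -
  obtain B where B: "\<forall>\<omega>\<in>Sigma_A N A. cmod (f \<omega>) \<le> B" using Vspace_bounded[OF assms(1)] by blast
  obtain K where K: "\<forall>m\<ge>K. \<forall>\<omega>\<in>Sigma_A N A. \<forall>\<omega>'\<in>Sigma_A N A.
                       (\<forall>k<m. \<omega> k = \<omega>' k) \<longrightarrow> cmod (f \<omega> - f \<omega>') < \<theta> ^ m"
    using Vspace_eventually_oscillation_less_power[OF assms(1,2)]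
    unfolding eventually_sequentially by blast
  have "cmod (f \<omega> - f \<omega>') / d_theta \<theta> \<omega> \<omega>' \<le> max 1 (2 * B / \<theta> ^ K)"
    if \<omega>: "\<omega> \<in> Sigma_A N A" "\<omega>' \<in> Sigma_A N A" "\<omega> \<noteq> \<omega>'" for \<omega> \<omega>'
  proof -
    define k where "k = first_diff \<omega> \<omega>'"
    have d: "d_theta \<theta> \<omega> \<omega>' = \<theta> ^ k" unfolding k_def using d_theta_neq[OF \<omega>(3)] .
    have "0 < \<theta> ^ k" using assms(2) by simp
    show ?thesis
    proof (cases "K \<le> k")
      case True
      then have "cmod (f \<omega> - f \<omega>') < \<theta> ^ k"
        using K \<omega> first_diff_agree[OF \<omega>(3)] unfolding k_def by blast
      then have "cmod (f \<omega> - f \<omega>') / \<theta> ^ k \<le> 1" using \<open>0 < \<theta> ^ k\<close> by simp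
      then show ?thesis unfolding d by linarith
    next
      case False
      have "cmod (f \<omega>) \<le> B" "cmod (f \<omega>') \<le> B" using B \<omega> by auto
      then have "cmod (f \<omega> - f \<omega>') \<le> 2 * B"
        using norm_triangle_ineq4[of "f \<omega>" "f \<omega>'"] by linarith
      moreover have "\<theta> ^ K \<le> \<theta> ^ k" using False assms(2,3) by (intro power_decreasing) auto
      ultimately have "cmod (f \<omega> - f \<omega>') / \<theta> ^ k \<le> 2 * B / \<theta> ^ K"
        using \<open>0 < \<theta> ^ k\<close> assms(2) norm_ge_zero[of "f \<omega> - f \<omega>'"]
        by (meson frac_le order_trans zero_less_power)
      then show ?thesis unfolding d by simp
    qed
  qed
  then show ?thesis using that by blast
qed

definition theta_bounded :: "nat \<Rightarrow> (nat \<Rightarrow> nat \<Rightarrow> nat) \<Rightarrow> real \<Rightarrow> (seq \<Rightarrow> complex) \<Rightarrow> bool" where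
  "theta_bounded N A \<theta> h \<longleftrightarrow> (\<exists>B. \<forall>\<omega>\<in>Sigma_A N A. cmod (h \<omega>) \<le> B) \<and>
     (\<exists>L. \<forall>\<omega>\<in>Sigma_A N A. \<forall>\<omega>'\<in>Sigma_A N A. \<omega> \<noteq> \<omega>' \<longrightarrow> cmod (h \<omega> - h \<omega>') / d_theta \<theta> \<omega> \<omega>' \<le> L)"

lemma Vspace_theta_bounded: "f \<in> Vspace N A \<Longrightarrow> 0 < \<theta> \<Longrightarrow> \<theta> < 1 \<Longrightarrow> theta_bounded N A \<theta> f"
  unfolding theta_bounded_def by (metis Vspace_bounded Vspace_lipschitz)

lemma theta_bounded_diff:
  assumes "theta_bounded N A \<theta> f" and "theta_bounded N A \<theta> g" and "0 < \<theta>"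
  shows "theta_bounded N A \<theta> (f - g)"
proof -
  obtain Bf Lf where
    Bf: "\<forall>\<omega>\<in>Sigma_A N A. cmod (f \<omega>) \<le> Bf" and
    Lf: "\<forall>\<omega>\<in>Sigma_A N A. \<forall>\<omega>'\<in>Sigma_A N A. \<omega> \<noteq> \<omega>' \<longrightarrow> cmod (f \<omega> - f \<omega>') / d_theta \<theta> \<omega> \<omega>' \<le> Lf"
    using assms(1) unfolding theta_bounded_def by blast
  obtain Bg Lg where
    Bg: "\<forall>\<omega>\<in>Sigma_A N A. cmod (g \<omega>) \<le> Bg" and
    Lg: "\<forall>\<omega>\<in>Sigma_A N A. \<forall>\<omega>'\<in>Sigma_A N A. \<omega> \<noteq> \<omega>' \<longrightarrow> cmod (g \<omega> - g \<omega>') / d_theta \<theta> \<omega> \<omega>' \<le> Lg"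
    using assms(2) unfolding theta_bounded_def by blast
  have "cmod ((f - g) \<omega>) \<le> Bf + Bg" if "\<omega> \<in> Sigma_A N A" for \<omega>
    using Bf Bg that norm_triangle_ineq4[of "f \<omega>" "g \<omega>"] by fastforce
  moreover have "cmod ((f - g) \<omega> - (f - g) \<omega>') / d_theta \<theta> \<omega> \<omega>' \<le> Lf + Lg"
    if \<omega>: "\<omega> \<in> Sigma_A N A" "\<omega>' \<in> Sigma_A N A" "\<omega> \<noteq> \<omega>'" for \<omega> \<omega>'
  proof -
    have "(f - g) \<omega> - (f - g) \<omega>' = (f \<omega> - f \<omega>') - (g \<omega> - g \<omega>')" by simp
    then have "cmod ((f - g) \<omega> - (f - g) \<omega>') \<le> cmod (f \<omega> - f \<omega>') + cmod (g \<omega> - g \<omega>')"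
      by (metis norm_triangle_ineq4)
    moreover have "0 < d_theta \<theta> \<omega> \<omega>'" using d_theta_neq[OF \<omega>(3)] assms(3) by simp
    ultimately have "cmod ((f - g) \<omega> - (f - g) \<omega>') / d_theta \<theta> \<omega> \<omega>' \<le>
        cmod (f \<omega> - f \<omega>') / d_theta \<theta> \<omega> \<omega>' + cmod (g \<omega> - g \<omega>') / d_theta \<theta> \<omega> \<omega>'"
      by (metis add_divide_distrib divide_right_mono less_le)
    then show ?thesis using Lf Lg \<omega> by fastforce
  qed
  ultimately show ?thesis unfolding theta_bounded_def by blast
qed

lemma norm_diff_le_theta_norm:
  assumes h: "theta_bounded N A \<theta> h" and "0 < \<theta>" and "\<theta> < 1"
    and a: "a \<in> Sigma_A N A" and b: "b \<in> Sigma_A N A" "a \<noteq> b"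
    and \<omega>: "\<omega> \<in> Sigma_A N A" "\<omega>' \<in> Sigma_A N A"
  shows "cmod (h \<omega> - h \<omega>') \<le> theta_norm N A \<theta> h"
proof -
  define P where "P = {(\<omega>, \<omega>'). \<omega> \<in> Sigma_A N A \<and> \<omega>' \<in> Sigma_A N A \<and> \<omega> \<noteq> \<omega>'}"
  define q where "q p = cmod (h (fst p) - h (snd p)) / d_theta \<theta> (fst p) (snd p)" for p
  obtain B L where B: "\<forall>\<omega>\<in>Sigma_A N A. cmod (h \<omega>) \<le> B"
    and L: "\<forall>\<omega>\<in>Sigma_A N A. \<forall>\<omega>'\<in>Sigma_A N A. \<omega> \<noteq> \<omega>' \<longrightarrow> cmod (h \<omega> - h \<omega>') / d_theta \<theta> \<omega> \<omega>' \<le> L"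
    using h unfolding theta_bounded_def by blast
  have "bdd_above ((\<lambda>\<omega>. cmod (h \<omega>)) ` Sigma_A N A)"
    using B by (intro bdd_aboveI2[where M = B]) simp
  then have sup: "cmod (h \<omega>) \<le> sup_norm N A h" if "\<omega> \<in> Sigma_A N A" for \<omega>
    unfolding sup_norm_def using that by (rule cSUP_upper[rotated])
  have "bdd_above (q ` P)"
    using L unfolding P_def q_def by (intro bdd_aboveI2[where M = L]) auto
  then have lip: "q p \<le> lip N A \<theta> h" if "p \<in> P" for p
    unfolding lip_def P_def[symmetric] q_def[symmetric] using that by (rule cSUP_upper[rotated])
  have "0 \<le> q (a, b)" unfolding q_def d_theta_def using \<open>0 < \<theta>\<close> by simp
  moreover have "(a, b) \<in> P" unfolding P_def using a b by simp
  ultimately have "0 \<le> lip N A \<theta> h" using lip by (meson order_trans)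
  moreover have "0 \<le> sup_norm N A h" using sup[OF a] norm_ge_zero[of "h a"] by linarith
  moreover have "cmod (h \<omega> - h \<omega>') \<le> lip N A \<theta> h" if "\<omega> \<noteq> \<omega>'"
  proof -
    have "0 < \<theta> ^ first_diff \<omega> \<omega>'" "\<theta> ^ first_diff \<omega> \<omega>' \<le> 1"
      using \<open>0 < \<theta>\<close> \<open>\<theta> < 1\<close> by (auto intro: power_le_one)
    then have "cmod (h \<omega> - h \<omega>') \<le> q (\<omega>, \<omega>')"
      unfolding q_def using d_theta_neq[OF that] by (simp add: le_divide_eq mult_left_le)
    then show ?thesis using lip[of "(\<omega>, \<omega>')"] \<omega> that unfolding P_def by simp
  qed
  ultimately show ?thesis unfolding theta_norm_def by (cases "\<omega> = \<omega>'") auto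
qed

lemma theta_norm_le_if_prefix_determined:
  assumes h: "prefix_determined N A K h" and B: "\<forall>\<omega>\<in>Sigma_A N A. cmod (h \<omega>) \<le> B"
    and a: "a \<in> Sigma_A N A" and b: "b \<in> Sigma_A N A" "a \<noteq> b" and "0 < \<theta>" and "\<theta> \<le> 1"
  shows "theta_norm N A \<theta> h \<le> B + 2 * B / \<theta> ^ K"
proof -
  have "sup_norm N A h \<le> B"
    unfolding sup_norm_def using a B by (intro cSUP_least) auto
  moreover have "lip N A \<theta> h \<le> 2 * B / \<theta> ^ K"
    unfolding lip_def
  proof (rule cSUP_least)
    show "{(\<omega>, \<omega>'). \<omega> \<in> Sigma_A N A \<and> \<omega>' \<in> Sigma_A N A \<and> \<omega> \<noteq> \<omega>'} \<noteq> {}" using a b by auto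
  next
    fix p assume "p \<in> {(\<omega>, \<omega>'). \<omega> \<in> Sigma_A N A \<and> \<omega>' \<in> Sigma_A N A \<and> \<omega> \<noteq> \<omega>'}"
    then obtain \<omega> \<omega>' where p: "p = (\<omega>, \<omega>')" and \<omega>: "\<omega> \<in> Sigma_A N A" "\<omega>' \<in> Sigma_A N A" "\<omega> \<noteq> \<omega>'"
      by auto
    define k where "k = first_diff \<omega> \<omega>'"
    have "0 < \<theta> ^ K" "0 < \<theta> ^ k" using \<open>0 < \<theta>\<close> by simp_all
    have "cmod (h \<omega>) \<le> B" "cmod (h \<omega>') \<le> B" using B \<omega> by auto
    then have osc: "cmod (h \<omega> - h \<omega>') \<le> 2 * B" using norm_triangle_ineq4[of "h \<omega>" "h \<omega>'"] by linarith
    have "cmod (h \<omega> - h \<omega>') / \<theta> ^ k \<le> 2 * B / \<theta> ^ K"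
    proof (cases "K \<le> k")
      case True
      then have "\<forall>i<K. \<omega> i = \<omega>' i" using first_diff_agree[OF \<omega>(3)] unfolding k_def by auto
      then have "h \<omega> = h \<omega>'" using h \<omega> unfolding prefix_determined_def by blast
      then show ?thesis using osc \<open>0 < \<theta> ^ K\<close> by simp
    next
      case False
      then have "\<theta> ^ K \<le> \<theta> ^ k" using \<open>0 < \<theta>\<close> \<open>\<theta> \<le> 1\<close> by (intro power_decreasing) auto
      then show ?thesis
        using osc \<open>0 < \<theta> ^ k\<close> \<open>0 < \<theta> ^ K\<close> norm_ge_zero[of "h \<omega> - h \<omega>'"] by (meson frac_le order_trans)
    qed
    then show "cmod (h (fst p) - h (snd p)) / d_theta \<theta> (fst p) (snd p) \<le> 2 * B / \<theta> ^ K"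
      using p d_theta_neq[OF \<omega>(3)] unfolding k_def by simp
  qed
  ultimately show ?thesis unfolding theta_norm_def by linarith
qed

lemma Vspace_add_prefix_determined:
  assumes \<phi>: "\<phi> \<in> Vspace N A" and g: "prefix_determined N A K g"
    and g_out: "\<forall>\<omega>. \<omega> \<notin> Sigma_A N A \<longrightarrow> g \<omega> = 0"
  shows "(\<lambda>\<omega>. \<phi> \<omega> + c * g \<omega>) \<in> Vspace N A"
proof -
  define \<psi> where "\<psi> \<omega> = \<phi> \<omega> + c * g \<omega>" for \<omega>
  have var_eq: "var N A m \<psi> = var N A m \<phi>" if "K \<le> m" for m
    unfolding var_def
  proof (rule SUP_cong[OF refl])
    fix p assume "p \<in> {(\<omega>, \<omega>'). \<omega> \<in> Sigma_A N A \<and> \<omega>' \<in> Sigma_A N A \<and> (\<forall>k<m. \<omega> k = \<omega>' k)}"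
    then obtain \<omega> \<omega>' where p: "p = (\<omega>, \<omega>')" and "\<omega> \<in> Sigma_A N A" "\<omega>' \<in> Sigma_A N A"
      and "\<forall>k<m. \<omega> k = \<omega>' k" by auto
    moreover have "\<forall>k<K. \<omega> k = \<omega>' k" using \<open>\<forall>k<m. \<omega> k = \<omega>' k\<close> \<open>K \<le> m\<close> by simp
    ultimately have "g \<omega> = g \<omega>'" using g unfolding prefix_determined_def by blast
    then show "ereal (cmod (\<psi> (fst p) - \<psi> (snd p))) = ereal (cmod (\<phi> (fst p) - \<phi> (snd p)))"
      unfolding \<psi>_def p by simp
  qed
  have ev: "\<forall>\<^sub>F m in sequentially. var N A m \<psi> = var N A m \<phi>"
    using eventually_ge_at_top[of K] by eventually_elim (rule var_eq)
  have "\<forall>\<^sub>F m in sequentially. var N A m \<phi> \<noteq> \<infinity>" using \<phi> unfolding Vspace_def by blast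
  then have "\<forall>\<^sub>F m in sequentially. var N A m \<psi> \<noteq> \<infinity>" using ev by eventually_elim simp
  moreover have "(\<lambda>m. real_of_ereal (var N A m \<psi>) powr (1 / real m)) \<longlonglongrightarrow> 0"
    using \<phi> ev unfolding Vspace_def
    by (auto elim!: Lim_transform_eventually elim: eventually_mono)
  moreover have "\<forall>\<omega>. \<omega> \<notin> Sigma_A N A \<longrightarrow> \<psi> \<omega> = 0"
    using \<phi> g_out unfolding Vspace_def \<psi>_def by simp
  ultimately show ?thesis unfolding \<psi>_def[abs_def] Vspace_def by blast
qed

lemma birkhoff_sum_diff: "birkhoff_sum n x (f - g) = birkhoff_sum n x f - birkhoff_sum n x g"
  unfolding birkhoff_sum_def by (simp add: sum_subtractf)

lemma norm_birkhoff_sum_diff_le_theta_norm: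
  assumes "theta_bounded N A \<theta> h" and "0 < \<theta>" and "\<theta> < 1"
    and x: "x \<in> Sigma_A N A" and y: "y \<in> Sigma_A N A" and "x \<noteq> y"
  shows "cmod (birkhoff_sum n x h - birkhoff_sum n y h) \<le> real n * theta_norm N A \<theta> h"
proof -
  have "cmod (birkhoff_sum n x h - birkhoff_sum n y h) = cmod (\<Sum>k<n. h (shifted x k) - h (shifted y k))"
    unfolding birkhoff_sum_def by (simp only: sum_subtractf)
  also have "\<dots> \<le> (\<Sum>k<n. cmod (h (shifted x k) - h (shifted y k)))"
    by (rule norm_sum)
  also have "\<dots> \<le> (\<Sum>k<n. theta_norm N A \<theta> h)"
    by (intro sum_mono norm_diff_le_theta_norm[OF assms(1-6)])
      (simp_all add: shifted_in_Sigma_A[OF x] shifted_in_Sigma_A[OF y])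
  finally show ?thesis by simp
qed

section \<open>The topology of V\<close>

definition theta_ball ::
    "nat \<Rightarrow> (nat \<Rightarrow> nat \<Rightarrow> nat) \<Rightarrow> real set \<Rightarrow> real \<Rightarrow> (seq \<Rightarrow> complex) \<Rightarrow> (seq \<Rightarrow> complex) set" where
  "theta_ball N A \<Theta> \<epsilon> \<phi> = {\<psi> \<in> Vspace N A. \<forall>\<theta>\<in>\<Theta>. theta_norm N A \<theta> (\<psi> - \<phi>) < \<epsilon>}"

lemma V_open_iff:
  "V_open N A U \<longleftrightarrow> U \<subseteq> Vspace N A \<and>
     (\<forall>\<phi>\<in>U. \<exists>\<Theta> \<epsilon>. finite \<Theta> \<and> \<Theta> \<subseteq> {0<..<1} \<and> 0 < \<epsilon> \<and> theta_ball N A \<Theta> \<epsilon> \<phi> \<subseteq> U)"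
  unfolding V_open_def theta_ball_def by blast

lemma istopology_V_open: "istopology (V_open N A)"
  unfolding istopology_def
proof (intro conjI allI impI)
  fix S T assume S: "V_open N A S" and T: "V_open N A T"
  show "V_open N A (S \<inter> T)"
    unfolding V_open_iff
  proof (intro conjI ballI)
    show "S \<inter> T \<subseteq> Vspace N A" using S unfolding V_open_iff by blast
    fix \<phi> assume "\<phi> \<in> S \<inter> T"
    then obtain \<Theta>1 \<epsilon>1 \<Theta>2 \<epsilon>2 where
      "finite \<Theta>1" "\<Theta>1 \<subseteq> {0<..<1}" "0 < \<epsilon>1" "theta_ball N A \<Theta>1 \<epsilon>1 \<phi> \<subseteq> S" and
      "finite \<Theta>2" "\<Theta>2 \<subseteq> {0<..<1}" "0 < \<epsilon>2" "theta_ball N A \<Theta>2 \<epsilon>2 \<phi> \<subseteq> T"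
      using S T unfolding V_open_iff by (meson IntD1 IntD2)
    moreover have "theta_ball N A (\<Theta>1 \<union> \<Theta>2) (min \<epsilon>1 \<epsilon>2) \<phi> \<subseteq>
        theta_ball N A \<Theta>1 \<epsilon>1 \<phi> \<inter> theta_ball N A \<Theta>2 \<epsilon>2 \<phi>"
      unfolding theta_ball_def by auto
    ultimately show "\<exists>\<Theta> \<epsilon>. finite \<Theta> \<and> \<Theta> \<subseteq> {0<..<1} \<and> 0 < \<epsilon> \<and> theta_ball N A \<Theta> \<epsilon> \<phi> \<subseteq> S \<inter> T"
      by (intro exI[of _ "\<Theta>1 \<union> \<Theta>2"] exI[of _ "min \<epsilon>1 \<epsilon>2"]) auto
  qed
next
  fix \<K> assume "\<forall>K\<in>\<K>. V_open N A K"
  then show "V_open N A (\<Union>\<K>)"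
    unfolding V_open_iff by (meson Sup_upper UnionE order_trans Sup_least)
qed

lemma openin_V_topology: "openin (V_topology N A) U \<longleftrightarrow> V_open N A U"
  unfolding V_topology_def using istopology_V_open by simp

lemma topspace_V_topology: "topspace (V_topology N A) = Vspace N A"
proof -
  have "theta_ball N A {} 1 \<phi> = Vspace N A" for \<phi>
    unfolding theta_ball_def by simp
  then have "V_open N A (Vspace N A)"
    unfolding V_open_iff by (metis empty_subsetI finite.emptyI order_refl zero_less_one)
  then show ?thesis
    unfolding topspace_def openin_V_topology V_open_iff by blast
qed

lemma closure_of_V_topology_eq_Vspace:
  assumes "\<And>\<phi> \<Theta> \<epsilon>. \<phi> \<in> Vspace N A \<Longrightarrow> finite \<Theta> \<Longrightarrow> \<Theta> \<subseteq> {0<..<1} \<Longrightarrow> 0 < \<epsilon> \<Longrightarrow>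
                 theta_ball N A \<Theta> \<epsilon> \<phi> \<inter> W \<noteq> {}"
  shows "V_topology N A closure_of W = Vspace N A"
proof -
  have "\<exists>\<psi>\<in>W. \<psi> \<in> T"
    if \<phi>: "\<phi> \<in> Vspace N A" and T: "\<phi> \<in> T" "openin (V_topology N A) T" for \<phi> T
  proof -
    obtain \<Theta> \<epsilon> where "finite \<Theta>" "\<Theta> \<subseteq> {0<..<1}" "0 < \<epsilon>" "theta_ball N A \<Theta> \<epsilon> \<phi> \<subseteq> T"
      using T unfolding openin_V_topology V_open_iff by blast
    then show ?thesis using assms[OF \<phi>] by blast
  qed
  then show ?thesis
    unfolding closure_of_def topspace_V_topology by blast
qed

lemma exists_scale_below_finite_bounds:
  fixes f :: "'a \<Rightarrow> real"
  assumes "finite S" and "0 < \<epsilon>"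
  obtains \<eta> where "0 < \<eta>" and "\<forall>s\<in>S. \<eta> * f s < \<epsilon>"
proof -
  define M where "M = Max (insert 0 (f ` S))"
  have "0 \<le> M" "\<forall>s\<in>S. f s \<le> M" unfolding M_def using assms(1) by auto
  then have "\<forall>s\<in>S. \<epsilon> / (M + 1) * f s < \<epsilon>"
    using assms(2) by (auto simp: field_simps intro: le_less_trans[of _ "\<epsilon> * M"] mult_left_mono)
  moreover have "0 < \<epsilon> / (M + 1)" using \<open>0 \<le> M\<close> assms(2) by simp
  ultimately show ?thesis using that by blast
qed

lemma exists_scale_nonzero:
  fixes a b :: complex
  assumes "b \<noteq> 0" and "0 < \<eta>"
  obtains \<eta>' where "0 < \<eta>'" and "\<eta>' \<le> \<eta>" and "a + of_real \<eta>' * b \<noteq> 0"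
proof -
  have "a + of_real \<eta> * b \<noteq> 0 \<or> a + of_real (\<eta> / 2) * b \<noteq> 0"
  proof (rule ccontr)
    assume "\<not> ?thesis"
    then have "of_real \<eta> * b = of_real (\<eta> / 2) * b" by (metis add_left_cancel)
    then show False using assms by simp
  qed
  then show ?thesis using that assms(2) by (metis field_sum_of_halves half_gt_zero less_add_same_cancel1 order_refl less_imp_le)
qed

lemma birkhoff_sum_add_scaled:
  "birkhoff_sum n x (\<lambda>\<omega>. \<phi> \<omega> + c * g \<omega>) = birkhoff_sum n x \<phi> + c * birkhoff_sum n x g"
  unfolding birkhoff_sum_def by (simp add: sum.distrib sum_distrib_left)

section \<open>Residuality\<close>

definition separating_functions :: "nat \<Rightarrow> (nat \<Rightarrow> nat \<Rightarrow> nat) \<Rightarrow> nat \<Rightarrow> (seq \<Rightarrow> complex) set" where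
  "separating_functions N A m = {\<phi> \<in> Vspace N A. \<exists>n x y \<pi>.
     matching_orbits N A m n x y \<pi> \<and> birkhoff_sum n x \<phi> \<noteq> birkhoff_sum n y \<phi>}"

lemma V_open_separating_functions: "V_open N A (separating_functions N A m)"
  unfolding V_open_iff
proof (intro conjI ballI)
  show "separating_functions N A m \<subseteq> Vspace N A" unfolding separating_functions_def by blast
  fix \<phi> assume "\<phi> \<in> separating_functions N A m"
  then obtain n x y \<pi> where \<phi>: "\<phi> \<in> Vspace N A" and match: "matching_orbits N A m n x y \<pi>"
    and sep: "birkhoff_sum n x \<phi> \<noteq> birkhoff_sum n y \<phi>"
    unfolding separating_functions_def by blast
  have x: "x \<in> Sigma_A N A" and y: "y \<in> Sigma_A N A" and "0 < n"
    using match unfolding matching_orbits_def by auto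
  have "x \<noteq> y" using sep by auto
  define \<delta> where "\<delta> = cmod (birkhoff_sum n x \<phi> - birkhoff_sum n y \<phi>)"
  have "0 < \<delta>" unfolding \<delta>_def using sep by simp
  have "theta_ball N A {1/2} (\<delta> / real n) \<phi> \<subseteq> separating_functions N A m"
  proof
    fix \<psi> assume "\<psi> \<in> theta_ball N A {1/2} (\<delta> / real n) \<phi>"
    then have \<psi>: "\<psi> \<in> Vspace N A" and small: "theta_norm N A (1/2) (\<psi> - \<phi>) < \<delta> / real n"
      unfolding theta_ball_def by auto
    have "theta_bounded N A (1/2) (\<psi> - \<phi>)"
      using Vspace_theta_bounded[OF \<psi>] Vspace_theta_bounded[OF \<phi>] by (simp add: theta_bounded_diff)
    then have "cmod (birkhoff_sum n x (\<psi> - \<phi>) - birkhoff_sum n y (\<psi> - \<phi>)) \<le>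
        real n * theta_norm N A (1/2) (\<psi> - \<phi>)"
      by (rule norm_birkhoff_sum_diff_le_theta_norm) (use x y \<open>x \<noteq> y\<close> in auto)
    also have "\<dots> < \<delta>" using small \<open>0 < n\<close> by (simp add: field_simps)
    finally have "cmod ((birkhoff_sum n x \<psi> - birkhoff_sum n y \<psi>) -
        (birkhoff_sum n x \<phi> - birkhoff_sum n y \<phi>)) < \<delta>"
      by (simp add: birkhoff_sum_diff algebra_simps)
    then have "birkhoff_sum n x \<psi> \<noteq> birkhoff_sum n y \<psi>"
      unfolding \<delta>_def by (auto simp: norm_minus_commute)
    then show "\<psi> \<in> separating_functions N A m"
      unfolding separating_functions_def using \<psi> match by blast
  qed
  moreover have "0 < \<delta> / real n" using \<open>0 < \<delta>\<close> \<open>0 < n\<close> by simp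
  ultimately show "\<exists>\<Theta> \<epsilon>. finite \<Theta> \<and> \<Theta> \<subseteq> {0<..<1} \<and> 0 < \<epsilon> \<and>
      theta_ball N A \<Theta> \<epsilon> \<phi> \<subseteq> separating_functions N A m"
    by (intro exI[of _ "{1/2}"] exI[of _ "\<delta> / real n"]) auto
qed

lemma separating_functions_meet_theta_ball:
  assumes "N \<ge> 2" and "zero_one_matrix N A" and "aperiodic N A"
    and \<phi>: "\<phi> \<in> Vspace N A" and "finite \<Theta>" and \<Theta>: "\<Theta> \<subseteq> {0<..<1}" and "0 < \<epsilon>"
  shows "theta_ball N A \<Theta> \<epsilon> \<phi> \<inter> separating_functions N A m \<noteq> {}"
proof -
  obtain n x y \<pi> K g where match: "matching_orbits N A m n x y \<pi>" and g: "prefix_determined N A K g"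
    and g_le: "\<forall>\<omega>. cmod (g \<omega>) \<le> 1" and g_out: "\<forall>\<omega>. \<omega> \<notin> Sigma_A N A \<longrightarrow> g \<omega> = 0"
    and sep: "birkhoff_sum n x g \<noteq> birkhoff_sum n y g"
    using matching_orbits_separated_by_locally_constant[OF assms(1-3)] by metis
  have x: "x \<in> Sigma_A N A" and y: "y \<in> Sigma_A N A"
    using match unfolding matching_orbits_def by blast+
  have "x \<noteq> y" using sep by metis
  obtain \<eta>0 where "0 < \<eta>0" and \<eta>0: "\<forall>\<theta>\<in>\<Theta>. \<eta>0 * (1 + 2 / \<theta> ^ K) < \<epsilon>"
    using exists_scale_below_finite_bounds[OF \<open>finite \<Theta>\<close> \<open>0 < \<epsilon>\<close>, of "\<lambda>\<theta>. 1 + 2 / \<theta> ^ K"]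
    by blast
  obtain \<eta> where "0 < \<eta>" "\<eta> \<le> \<eta>0" and sep':
    "(birkhoff_sum n x \<phi> - birkhoff_sum n y \<phi>) + of_real \<eta> * (birkhoff_sum n x g - birkhoff_sum n y g) \<noteq> 0"
    using exists_scale_nonzero[of "birkhoff_sum n x g - birkhoff_sum n y g" \<eta>0] sep \<open>0 < \<eta>0\<close>
    by (metis eq_iff_diff_eq_0)
  define \<psi> where "\<psi> \<omega> = \<phi> \<omega> + of_real \<eta> * g \<omega>" for \<omega>
  have "\<psi> \<in> Vspace N A"
    unfolding \<psi>_def[abs_def] using Vspace_add_prefix_determined[OF \<phi> g g_out] .
  moreover have "birkhoff_sum n x \<psi> \<noteq> birkhoff_sum n y \<psi>"
    using sep' unfolding \<psi>_def[abs_def] birkhoff_sum_add_scaled by (simp add: algebra_simps)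
  moreover have "theta_norm N A \<theta> (\<psi> - \<phi>) < \<epsilon>" if "\<theta> \<in> \<Theta>" for \<theta>
  proof -
    have "0 < \<theta>" "\<theta> \<le> 1" using \<Theta> that by auto
    have diff: "\<psi> - \<phi> = (\<lambda>\<omega>. of_real \<eta> * g \<omega>)" unfolding \<psi>_def by auto
    have "prefix_determined N A K (\<psi> - \<phi>)"
      using g unfolding prefix_determined_def diff by metis
    moreover have "\<forall>\<omega>\<in>Sigma_A N A. cmod ((\<psi> - \<phi>) \<omega>) \<le> \<eta>"
      using g_le \<open>0 < \<eta>\<close> unfolding diff by (simp add: norm_mult mult_left_le)
    ultimately have "theta_norm N A \<theta> (\<psi> - \<phi>) \<le> \<eta> + 2 * \<eta> / \<theta> ^ K"
      using theta_norm_le_if_prefix_determined x y \<open>x \<noteq> y\<close> \<open>0 < \<theta>\<close> \<open>\<theta> \<le> 1\<close> by blast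
    also have "\<dots> = \<eta> * (1 + 2 / \<theta> ^ K)" by (simp add: algebra_simps)
    also have "\<dots> \<le> \<eta>0 * (1 + 2 / \<theta> ^ K)"
      using \<open>\<eta> \<le> \<eta>0\<close> \<open>0 < \<theta>\<close> by (intro mult_right_mono) auto
    also have "\<dots> < \<epsilon>" using \<eta>0 that by blast
    finally show ?thesis .
  qed
  ultimately have "\<psi> \<in> theta_ball N A \<Theta> \<epsilon> \<phi> \<inter> separating_functions N A m"
    unfolding theta_ball_def separating_functions_def using match by blast
  then show ?thesis by blast
qed

lemma Inter_separating_functions_subset_Rset: "(\<Inter>m. separating_functions N A m) \<subseteq> Rset N A"
proof
  fix \<phi> assume \<phi>: "\<phi> \<in> (\<Inter>m. separating_functions N A m)"
  have "\<not> cohomologous_to_lc N A \<phi>"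
  proof
    assume "cohomologous_to_lc N A \<phi>"
    then obtain K where "\<forall>n x y \<pi>. matching_orbits N A K n x y \<pi> \<longrightarrow> birkhoff_sum n x \<phi> = birkhoff_sum n y \<phi>"
      using cohomologous_to_lc_imp_birkhoff_sums_eq by blast
    moreover have "\<phi> \<in> separating_functions N A K" using \<phi> by blast
    ultimately show False unfolding separating_functions_def by blast
  qed
  then show "\<phi> \<in> Rset N A" using \<phi> unfolding Rset_def separating_functions_def by blast
qed

theorem theoremB2:
  fixes N :: nat and A :: "nat \<Rightarrow> nat \<Rightarrow> nat"
  assumes "N \<ge> 2" and "zero_one_matrix N A" and "aperiodic N A"
  shows "\<exists>W :: nat \<Rightarrow> (seq \<Rightarrow> complex) set.
           (\<forall>m. openin (V_topology N A) (W m) \<and>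
                (V_topology N A) closure_of (W m) = Vspace N A) \<and>
           (\<Inter>m. W m) \<subseteq> Rset N A"
proof (intro exI[of _ "separating_functions N A"] conjI allI)
  fix m
  show "openin (V_topology N A) (separating_functions N A m)"
    unfolding openin_V_topology by (rule V_open_separating_functions)
  show "V_topology N A closure_of separating_functions N A m = Vspace N A"
    by (intro closure_of_V_topology_eq_Vspace separating_functions_meet_theta_ball[OF assms])
qed (rule Inter_separating_functions_subset_Rset)

end
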